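(* As operators on holomorphic $V_\tau$-valued functions $f$ on $\Omega$, $$\mathcal{H}_M:=L(x)\sum_{i=1}^N(\mathcal{U}_i-1-\kappa\gamma)^2L(x)^{-1}=\sum_{i=1}^N(x_i\partial_i)^2-2\kappa\sum_{1\le i<j\le N}\frac{x_ix_j}{(x_i-x_j)^2}\bigl(\kappa-\sigma^M(i,j)\bigr).$$
   Context: Setup: $\tau$ is a partition of $N$ (not $(N)$, $(1^N)$) identified with the irreducible orthogonal representation of $\mathcal{S}_N$ on $V_\tau\cong\mathbb{C}^{n_\tau}$ (orthonormal basis), $\tau(i,j):=\tau((i,j))$. $c(i,T)=(\text{column of }i)-(\text{row of }i)$ in a standard tableau $T$, $S_1(\tau)=\sum_ic(i,T)$, $\gamma=S_1(\tau)/N$. $\mathcal{S}_N$ acts on $x$ by $(xw)_i=x_{w(i)}$. $\mathbb{C}^N_{reg}=\{x\in(\mathbb{C}\setminus\{0\})^N:x_i\neq x_j,\ i\ne j\}$; $\Omega\subset\mathbb{C}^N_{reg}$ is open with $\Omega w=\Omega$ for all $w$. $L:\Omega\to GL_{n_\tau}(\mathbb{C})$ is holomorphic and satisfies $\partial_iL(x)=\kappa L(x)\bigl\{\sum_{j\ne i}\frac{\tau(i,j)}{x_i-x_j}-\frac{\gamma}{x_i}I\bigr\}$, $1\le i\le N$ ($\kappa\in\mathbb{R}$). $M:\mathcal{S}_N\times\Omega\to GL_{n_\tau}(\mathbb{C})$ is locally constant in $x$ with $M(I,x)=I$, $M(w_1w_2,x)=M(w_2,xw_1)M(w_1,x)$,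 and $L(xw)=M(w,x)L(x)\tau(w)$. $(\sigma^M(w)f)(x)=M(w,x)^{-1}f(xw)$. The operators $\mathcal{D}_i g(x)=\partial_ig(x)+\kappa\sum_{j\ne i}\tau(i,j)\frac{g(x)-g(x(i,j))}{x_i-x_j}$ and $\mathcal{U}_ig(x)=\mathcal{D}_i(x_ig)(x)-\kappa\sum_{j<i}\tau(i,j)g(x(i,j))$ are applied to holomorphic $V_\tau$-valued functions $g$ on $\Omega$. *)

theory Defs
  imports "HOL-Analysis.Analysis"
begin

(* Coordinates of C^N are indexed by a finite linearly ordered type 'n with N = CARD('n);
   V_tau = C^{n_tau} is complex^'k with n_tau = CARD('k). *)

definition is_partition :: "nat list \<Rightarrow> nat \<Rightarrow> bool" where
  "is_partition lam N \<longleftrightarrow> sorted (rev lam) \<and> (\<forall>p\<in>set lam. 0 < p) \<and> sum_list lam = N"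

(* cells (row, column), 0-based *)
definition diagram :: "nat list \<Rightarrow> (nat \<times> nat) set" where
  "diagram lam = {(r, c). r < length lam \<and> c < lam ! r}"

(* a standard tableau filled with the entries of 'n, given by the position of each entry *)
definition SYT :: "nat list \<Rightarrow> ('n::{finite,linorder} \<Rightarrow> nat \<times> nat) set" where
  "SYT lam = {P. bij_betw P UNIV (diagram lam)
      \<and> (\<forall>i j. fst (P j) = fst (P i) \<and> snd (P j) = Suc (snd (P i)) \<longrightarrow> i < j)
      \<and> (\<forall>i j. fst (P j) = Suc (fst (P i)) \<and> snd (P j) = snd (P i) \<longrightarrow> i < j)}"

definition content :: "'n \<Rightarrow> ('n \<Rightarrow> nat \<times> nat) \<Rightarrow> int" where
  "content i P = int (snd (P i)) - int (fst (P i))"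

(* S_1(tau) = sum_i c(i,T), independent of the standard tableau T *)
definition S1 :: "nat list \<Rightarrow> int" where
  "S1 lam = (\<Sum>(r, c)\<in>diagram lam. int c - int r)"

definition adjacent :: "'n::linorder \<Rightarrow> 'n \<Rightarrow> bool" where
  "adjacent s s' \<longleftrightarrow> s < s' \<and> (\<forall>t. \<not> (s < t \<and> t < s'))"

(* Young's orthogonal form of the adjacent transposition (s,s'), in the basis e_{b T}, T standard *)
definition young_adj :: "nat list \<Rightarrow> (('n::{finite,linorder} \<Rightarrow> nat \<times> nat) \<Rightarrow> 'k::finite)
    \<Rightarrow> 'n \<Rightarrow> 'n \<Rightarrow> complex^'k^'k" where
  "young_adj lam b s s' = (\<chi> a c.
     let T = inv_into (SYT lam) b c; U = inv_into (SYT lam) b a;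
         r = content s' T - content s T
     in if U = T then complex_of_real (1 / real_of_int r)
        else if U = T \<circ> Transposition.transpose s s'
          then complex_of_real (sqrt (1 - 1 / (real_of_int r)\<^sup>2))
        else 0)"

(* rho is the irreducible real orthogonal representation of S_N labelled by lam *)
definition irrep_of :: "nat list \<Rightarrow> (('n::{finite,linorder} \<Rightarrow> 'n) \<Rightarrow> complex^'k::finite^'k) \<Rightarrow> bool" where
  "irrep_of lam rho \<longleftrightarrow>
     rho id = mat 1 \<and>
     (\<forall>w1 w2. w1 permutes UNIV \<longrightarrow> w2 permutes UNIV \<longrightarrow> rho (w1 \<circ> w2) = rho w1 ** rho w2) \<and>
     (\<exists>b Q. bij_betw b (SYT lam) (UNIV :: 'k set) \<and>
        (\<forall>a c. Q $ a $ c \<in> \<real>) \<and> transpose Q ** Q = mat 1 \<and>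
        (\<forall>s s'. adjacent s s' \<longrightarrow>
            rho (Transposition.transpose s s') = Q ** young_adj lam b s s' ** transpose Q))"

definition act :: "complex^'n \<Rightarrow> ('n \<Rightarrow> 'n) \<Rightarrow> complex^'n" where
  "act x w = (\<chi> i. x $ w i)"

definition regular :: "(complex^'n) set" where
  "regular = {x. (\<forall>i. x $ i \<noteq> 0) \<and> (\<forall>i j. i \<noteq> j \<longrightarrow> x $ i \<noteq> x $ j)}"

definition holo :: "(complex^'n \<Rightarrow> complex) \<Rightarrow> (complex^'n) set \<Rightarrow> bool" where
  "holo g S \<longleftrightarrow> (\<forall>x\<in>S. \<exists>D. (g has_derivative D) (at x) \<and> (\<forall>c v. D (c *s v) = c * D v))"

definition holo_vec :: "(complex^'n \<Rightarrow> complex^'k) \<Rightarrow> (complex^'n) set \<Rightarrow> bool" where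
  "holo_vec f S \<longleftrightarrow> (\<forall>a. holo (\<lambda>x. f x $ a) S)"

definition holo_mat :: "(complex^'n \<Rightarrow> complex^'k^'l) \<Rightarrow> (complex^'n) set \<Rightarrow> bool" where
  "holo_mat F S \<longleftrightarrow> (\<forall>a c. holo (\<lambda>x. F x $ a $ c) S)"

definition pd :: "'n \<Rightarrow> (complex^'n \<Rightarrow> complex^'k) \<Rightarrow> complex^'n \<Rightarrow> complex^'k" where
  "pd i g x = (\<chi> a. deriv (\<lambda>t. g (x + t *s axis i 1) $ a) 0)"

definition pdm :: "'n \<Rightarrow> (complex^'n \<Rightarrow> complex^'k^'l) \<Rightarrow> complex^'n \<Rightarrow> complex^'k^'l" where
  "pdm i F x = (\<chi> a c. deriv (\<lambda>t. F (x + t *s axis i 1) $ a $ c) 0)"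

definition Dop :: "real \<Rightarrow> (('n::{finite,linorder} \<Rightarrow> 'n::{finite,linorder}) \<Rightarrow> complex^'k^'k) \<Rightarrow> 'n::{finite,linorder}
    \<Rightarrow> (complex^'n::{finite,linorder} \<Rightarrow> complex^'k) \<Rightarrow> complex^'n::{finite,linorder} \<Rightarrow> complex^'k" where
  "Dop \<kappa> rho i g x = pd i g x +
     (\<Sum>j\<in>UNIV - {i}. (complex_of_real \<kappa> / (x $ i - x $ j)) *s
        (rho (Transposition.transpose i j) *v (g x - g (act x (Transposition.transpose i j)))))"

definition Uop :: "real \<Rightarrow> (('n::{finite,linorder} \<Rightarrow> 'n::{finite,linorder}) \<Rightarrow> complex^'k^'k) \<Rightarrow> 'n::{finite,linorder}
    \<Rightarrow> (complex^'n::{finite,linorder} \<Rightarrow> complex^'k) \<Rightarrow> complex^'n::{finite,linorder} \<Rightarrow> complex^'k" where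
  "Uop \<kappa> rho i g x = Dop \<kappa> rho i (\<lambda>y. (y $ i) *s g y) x -
     (\<Sum>j\<in>{j. j < i}. complex_of_real \<kappa> *s
        (rho (Transposition.transpose i j) *v g (act x (Transposition.transpose i j))))"

definition sigmaM :: "(('n \<Rightarrow> 'n) \<Rightarrow> complex^'n \<Rightarrow> complex^'k^'k) \<Rightarrow> ('n \<Rightarrow> 'n)
    \<Rightarrow> (complex^'n \<Rightarrow> complex^'k) \<Rightarrow> complex^'n \<Rightarrow> complex^'k" where
  "sigmaM M w f x = matrix_inv (M w x) *v f (act x w)"

end

theory Submission
  imports Defs "HOL-Complex_Analysis.Cauchy_Integral_Formula"
begin

text \<open>Conjugation by \<open>L\<close> turns \<open>\<U>\<^sub>i - 1 - \<kappa>\<gamma>\<close> into the first-order operator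
  \<open>W\<^sub>i = x\<^sub>i \<partial>\<^sub>i + \<kappa> \<Sum>\<^sub>j\<^sub>\<noteq>\<^sub>i c\<^sub>i\<^sub>j(x) \<sigma>\<^sup>M(i,j)\<close> with \<open>c\<^sub>i\<^sub>j(x) = [i < j] - x\<^sub>i / (x\<^sub>i - x\<^sub>j)\<close>:
  the differential equation for \<open>L\<close> produces the \<open>\<tau>(i,j)\<close>-terms of \<open>\<D>\<^sub>i\<close>, and
  \<open>L(x) \<tau>(w) L(xw)\<^sup>-\<^sup>1 = M(w,x)\<^sup>-\<^sup>1\<close> turns them into \<open>\<sigma>\<^sup>M(w)\<close>.
  In \<open>\<Sum>\<^sub>i W\<^sub>i\<^sup>2\<close> the mixed first-order terms cancel because \<open>c\<^sub>j\<^sub>i = -c\<^sub>i\<^sub>j\<close>; the terms with three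
  distinct indices cancel because \<open>\<sigma>\<^sup>M\<close> is a representation and
  \<open>c\<^sub>i\<^sub>j(x) c\<^sub>i\<^sub>k(x(i,j))\<close> has vanishing cyclic sum; what remains is
  \<open>x\<^sub>i \<partial>\<^sub>i c\<^sub>i\<^sub>j = x\<^sub>i x\<^sub>j/(x\<^sub>i-x\<^sub>j)\<^sup>2 = -c\<^sub>i\<^sub>j(x) c\<^sub>i\<^sub>j(x(i,j))\<close>, which gives the potential.\<close>

lemma matrix_vector_mult_sum_left:
  "(sum A S :: 'a::comm_ring_1^'n^'m) *v v = (\<Sum>j\<in>S. A j *v v)"
  by (simp add: vec_eq_iff matrix_vector_mult_def sum_distrib_right sum_component; rule allI; rule sum.swap)

lemma matrix_vector_mult_sum_right:
  "(A::'a::comm_ring_1^'n^'m) *v (sum v S) = (\<Sum>j\<in>S. A *v v j)"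
  by (simp add: vec_eq_iff matrix_vector_mult_def sum_distrib_left sum_component; rule allI; rule sum.swap)

lemma mat_matrix_vector_mult: "mat c *v (v::'a::comm_ring_1^'n) = c *s v"
  by (simp add: vec_eq_iff matrix_vector_mult_def mat_def if_distrib if_distribR cong: if_cong)

lemma mat_mult_matrix_vector_mult: "(mat c ** (A::'a::field^'n^'m)) *v v = c *s (A *v v)"
  by (simp add: matrix_vector_mul_assoc[symmetric] mat_matrix_vector_mult)

lemma scaleR_matrix_vector_mult:
  "(k *\<^sub>R (A::complex^'n^'m)) *v v = complex_of_real k *s (A *v v)"
  unfolding vec_eq_iff matrix_vector_mult_def
  by (simp add: sum_distrib_left mult.assoc) (simp add: scaleR_conv_of_real)

lemma matrix_inv_right: "invertible (A::'a::field^'n^'n) \<Longrightarrow> A ** matrix_inv A = mat 1"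
  unfolding invertible_def matrix_inv_def by (rule someI2_ex) auto

lemma matrix_inv_left: "invertible (A::'a::field^'n^'n) \<Longrightarrow> matrix_inv A ** A = mat 1"
  unfolding invertible_def matrix_inv_def by (rule someI2_ex) auto

lemma matrix_vector_mult_matrix_inv:
  "invertible (A::'a::field^'n^'n) \<Longrightarrow> A *v (matrix_inv A *v v) = v"
  by (simp add: matrix_vector_mul_assoc matrix_inv_right)

lemma matrix_inv_matrix_vector_mult:
  "invertible (A::'a::field^'n^'n) \<Longrightarrow> matrix_inv A *v (A *v v) = v"
  by (simp add: matrix_vector_mul_assoc matrix_inv_left)

lemma matrix_vector_mult_eq_iff_matrix_inv:
  "invertible (A::'a::field^'n^'n) \<Longrightarrow> A *v u = v \<longleftrightarrow> u = matrix_inv A *v v"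
  by (metis matrix_vector_mult_matrix_inv matrix_inv_matrix_vector_mult)

lemma matrix_inv_mult_vector:
  assumes "invertible (A::'a::field^'n^'n)" "invertible (B::'a^'n^'n)"
  shows "matrix_inv (A ** B) *v v = matrix_inv B *v (matrix_inv A *v v)"
proof -
  have "(A ** B) *v (matrix_inv B *v (matrix_inv A *v v)) = v"
    by (simp add: matrix_vector_mul_assoc[symmetric] matrix_vector_mult_matrix_inv assms)
  then show ?thesis
    using matrix_vector_mult_eq_iff_matrix_inv[OF invertible_mult[OF assms]] by metis
qed

lemma matrix_inv_mat_1_vector: "matrix_inv (mat 1 :: 'a::field^'n^'n) *v v = v"
proof -
  have "invertible (mat 1 :: 'a^'n^'n)"
    unfolding invertible_def by (intro exI[of _ "mat 1"]) simp
  then show ?thesis using matrix_vector_mult_eq_iff_matrix_inv by (metis matrix_vector_mul_lid)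
qed

lemma matrix_inv_vector_diff:
  fixes A B :: "'a::field^'n^'n"
  assumes "invertible A" "invertible B"
  shows "matrix_inv B *v v - matrix_inv A *v u
       = matrix_inv A *v (v - u - (B - A) *v (matrix_inv B *v v))"
proof -
  have "v - u - (B - A) *v (matrix_inv B *v v) = A *v (matrix_inv B *v v - matrix_inv A *v u)"
    using assms by (simp add: matrix_vector_mult_matrix_inv algebra_simps)
  then show ?thesis using assms(1) by (simp add: matrix_inv_matrix_vector_mult)
qed

section \<open>Partial derivatives along coordinate lines\<close>

definition has_pd :: "'n::finite \<Rightarrow> (complex^'n \<Rightarrow> complex^'k) \<Rightarrow> complex^'n \<Rightarrow> complex^'k \<Rightarrow> bool" where
  "has_pd i g y v \<longleftrightarrow> (\<forall>a. ((\<lambda>t. g (y + t *s axis i 1) $ a) has_field_derivative v $ a) (at 0))"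

definition has_pdm :: "'n::finite \<Rightarrow> (complex^'n \<Rightarrow> complex^'k^'l) \<Rightarrow> complex^'n \<Rightarrow> complex^'k^'l \<Rightarrow> bool" where
  "has_pdm i F y V \<longleftrightarrow> (\<forall>a c. ((\<lambda>t. F (y + t *s axis i 1) $ a $ c) has_field_derivative V $ a $ c) (at 0))"

definition has_pds :: "'n::finite \<Rightarrow> (complex^'n \<Rightarrow> complex) \<Rightarrow> complex^'n \<Rightarrow> complex \<Rightarrow> bool" where
  "has_pds i s y d \<longleftrightarrow> ((\<lambda>t. s (y + t *s axis i 1)) has_field_derivative d) (at 0)"

lemma has_pd_imp_pd: "has_pd i g y v \<Longrightarrow> pd i g y = v"
  unfolding has_pd_def pd_def by (simp add: vec_eq_iff DERIV_imp_deriv)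

lemma has_pd_add: "has_pd i f y u \<Longrightarrow> has_pd i g y v \<Longrightarrow> has_pd i (\<lambda>z. f z + g z) y (u + v)"
  unfolding has_pd_def by (simp add: DERIV_add)

lemma has_pd_scale: "has_pd i f y u \<Longrightarrow> has_pd i (\<lambda>z. c *s f z) y (c *s u)"
  unfolding has_pd_def by (simp add: DERIV_cmult)

lemma has_pd_sum:
  "finite S \<Longrightarrow> (\<And>j. j \<in> S \<Longrightarrow> has_pd i (f j) y (u j)) \<Longrightarrow>
    has_pd i (\<lambda>z. \<Sum>j\<in>S. f j z) y (\<Sum>j\<in>S. u j)"
  unfolding has_pd_def sum_component by (simp add: DERIV_sum)

lemma has_pd_mult:
  assumes "has_pds i s y d" "has_pd i u y u'"
  shows "has_pd i (\<lambda>z. s z *s u z) y (d *s u y + s y *s u')"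
  using assms unfolding has_pd_def has_pds_def by (auto intro!: derivative_eq_intros)

lemma has_pd_matrix_vector_mult:
  "has_pd i u y u' \<Longrightarrow> has_pd i (\<lambda>z. C *v u z) y (C *v u')"
  unfolding has_pd_def matrix_vector_mult_def by (auto intro!: derivative_eq_intros simp: mult.commute)

lemma has_pd_cong_ev:
  assumes "\<forall>\<^sub>F t in nhds 0. f (y + t *s axis i 1) = g (y + t *s axis i 1)" "has_pd i f y v"
  shows "has_pd i g y v"
  unfolding has_pd_def
proof
  fix a
  have "\<forall>\<^sub>F t in nhds 0. f (y + t *s axis i 1) $ a = g (y + t *s axis i 1) $ a"
    using assms(1) by eventually_elim simp
  from DERIV_cong_ev[OF refl this refl]
  show "((\<lambda>t. g (y + t *s axis i 1) $ a) has_field_derivative v $ a) (at 0)"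
    using assms(2) unfolding has_pd_def by blast
qed

lemma has_pds_coordinate: "has_pds i (\<lambda>z. z $ i) y 1"
  unfolding has_pds_def by (auto simp: axis_def intro!: derivative_eq_intros)

lemma line_has_derivative:
  "((\<lambda>t. y + t *s v) has_derivative (\<lambda>t. t *s (v::complex^'n))) (at t0)"
proof -
  have "linear (\<lambda>t::complex. t *s v)"
    by (rule linearI) (simp_all add: vec_eq_iff algebra_simps)
  then have "bounded_linear (\<lambda>t::complex. t *s v)"
    using linear_conv_bounded_linear by blast
  from has_derivative_add[OF has_derivative_const bounded_linear.has_derivative[OF this has_derivative_ident]]
  show ?thesis by simp
qed

lemma open_line_vimage: "open S \<Longrightarrow> open {t::complex. y + t *s (v::complex^'n) \<in> S}"
proof -
  assume "open S"
  have "continuous_on UNIV (\<lambda>t::complex. y + t *s v)"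
    by (intro continuous_at_imp_continuous_on ballI has_derivative_continuous[OF line_has_derivative])
  then show ?thesis using \<open>open S\<close> open_vimage[of S "\<lambda>t::complex. y + t *s v"]
    by (simp add: vimage_def)
qed

lemma holo_line_differentiable:
  assumes "holo g S" "y \<in> S"
  shows "\<exists>d. ((\<lambda>t. g (y + t *s axis i 1)) has_field_derivative d) (at 0)"
proof -
  obtain D where D: "(g has_derivative D) (at y)" and lin: "\<And>c v. D (c *s v) = c * D v"
    using assms unfolding holo_def by blast
  have "((g \<circ> (\<lambda>t. y + t *s axis i 1)) has_derivative (D \<circ> (\<lambda>t. t *s axis i 1))) (at 0)"
    by (rule diff_chain_at[OF line_has_derivative]) (simp add: D)
  moreover have "D \<circ> (\<lambda>t. t *s axis i 1) = (*) (D (axis i 1))"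
    by (auto simp: lin)
  ultimately show ?thesis unfolding has_field_derivative_def o_def by auto
qed

definition holo_along :: "'n::finite \<Rightarrow> (complex^'n \<Rightarrow> complex^'k) \<Rightarrow> (complex^'n) set \<Rightarrow> bool" where
  "holo_along i g S \<longleftrightarrow>
     (\<forall>y\<in>S. \<forall>a. \<exists>d. ((\<lambda>t. g (y + t *s axis i 1) $ a) has_field_derivative d) (at 0))"

lemma holo_vec_imp_holo_along: "holo_vec f S \<Longrightarrow> holo_along i f S"
  unfolding holo_vec_def holo_along_def
proof (intro ballI allI)
  fix y a assume "\<forall>a. holo (\<lambda>x. f x $ a) S" "y \<in> S"
  then show "\<exists>d. ((\<lambda>t. f (y + t *s axis i 1) $ a) has_field_derivative d) (at 0)"
    using holo_line_differentiable[of "\<lambda>x. f x $ a" S y i] by simp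
qed

lemma holo_along_has_pd: "holo_along i g S \<Longrightarrow> y \<in> S \<Longrightarrow> has_pd i g y (pd i g y)"
  unfolding holo_along_def has_pd_def pd_def
  by (metis (no_types, lifting) DERIV_imp_deriv vec_lambda_beta)

lemma holo_mat_has_pdm: "holo_mat F S \<Longrightarrow> y \<in> S \<Longrightarrow> has_pdm i F y (pdm i F y)"
  unfolding holo_mat_def has_pdm_def pdm_def
proof (intro allI)
  fix a c assume "\<forall>a c. holo (\<lambda>x. F x $ a $ c) S" "y \<in> S"
  then obtain d where "((\<lambda>t. F (y + t *s axis i 1) $ a $ c) has_field_derivative d) (at 0)"
    using holo_line_differentiable[of "\<lambda>x. F x $ a $ c" S y i] by blast
  then show "((\<lambda>t. F (y + t *s axis i 1) $ a $ c) has_field_derivative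
      (\<chi> a c. deriv (\<lambda>t. F (y + t *s axis i 1) $ a $ c) 0) $ a $ c) (at 0)"
    by (simp add: DERIV_imp_deriv)
qed

lemma holo_along_pd:
  assumes g: "holo_along i g S" and S: "open S"
  shows "holo_along i (pd i g) S"
  unfolding holo_along_def
proof (intro ballI allI)
  fix y a assume y: "y \<in> S"
  define F where "F t = g (y + t *s axis i 1) $ a" for t
  define T where "T = {t. y + t *s axis i 1 \<in> S}"
  have T: "open T" unfolding T_def by (rule open_line_vimage[OF S])
  have 0: "0 \<in> T" using y by (simp add: T_def)
  have dF: "(F has_field_derivative pd i g (y + t *s axis i 1) $ a) (at t)" if "t \<in> T" for t
  proof -
    have "has_pd i g (y + t *s axis i 1) (pd i g (y + t *s axis i 1))"
      using that holo_along_has_pd[OF g] by (simp add: T_def)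
    moreover have "(\<lambda>s. F (s + t)) = (\<lambda>s. g ((y + t *s axis i 1) + s *s axis i 1) $ a)"
      by (simp add: F_def vector_sadd_rdistrib add_ac)
    ultimately have "((\<lambda>s. F (s + t)) has_field_derivative pd i g (y + t *s axis i 1) $ a) (at 0)"
      unfolding has_pd_def by simp
    then show ?thesis using DERIV_shift[of F _ 0 t] by simp
  qed
  then have "F holomorphic_on T"
    unfolding holomorphic_on_open[OF T] by blast
  then have "deriv F holomorphic_on T"
    using holomorphic_deriv T by blast
  then have "(deriv F has_field_derivative deriv (deriv F) 0) (at 0)"
    using T 0 holomorphic_derivI by blast
  moreover have "\<forall>\<^sub>F t in nhds 0. pd i g (y + t *s axis i 1) $ a = deriv F t"
    using eventually_nhds_in_open[OF T 0] by eventually_elim (rule DERIV_imp_deriv[OF dF, symmetric])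
  ultimately have "((\<lambda>t. pd i g (y + t *s axis i 1) $ a) has_field_derivative deriv (deriv F) 0) (at 0)"
    by (metis (mono_tags) DERIV_cong_ev)
  then show "\<exists>d. ((\<lambda>t. pd i g (y + t *s axis i 1) $ a) has_field_derivative d) (at 0)" by blast
qed

section \<open>Derivative of an inverse matrix\<close>

lemma isCont_det:
  assumes "\<And>i j. isCont (\<lambda>t. B t $ i $ j) t0"
  shows "isCont (\<lambda>t. det (B t :: 'a::{real_normed_field}^'k^'k)) t0"
  unfolding det_def by (intro continuous_intros assms)

lemma isCont_matrix_inv_vector:
  fixes A :: "complex \<Rightarrow> complex^'k^'k" and u :: "complex \<Rightarrow> complex^'k"
  assumes cA: "\<And>a c. isCont (\<lambda>t. A t $ a $ c) 0" and cu: "\<And>a. isCont (\<lambda>t. u t $ a) 0"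
    and inv: "\<forall>\<^sub>F t in nhds 0. invertible (A t)"
  shows "isCont (\<lambda>t. (matrix_inv (A t) *v u t) $ k) 0"
proof -
  define C where "C t = det (\<chi> i j. if j = k then u t $ i else A t $ i $ j)" for t
  have quot: "\<forall>\<^sub>F t in nhds 0. C t / det (A t) = (matrix_inv (A t) *v u t) $ k"
    using inv
  proof eventually_elim
    case (elim t)
    have "det (A t) \<noteq> 0" using elim invertible_det_nz by blast
    from cramer[OF this] matrix_vector_mult_matrix_inv[OF elim]
    show ?case by (simp add: C_def)
  qed
  have "det (A 0) \<noteq> 0" using inv invertible_det_nz eventually_nhds_x_imp_x by blast
  moreover have "isCont C 0"
    unfolding C_def by (rule isCont_det) (case_tac "j = k", simp_all add: cA cu)
  moreover have "isCont (\<lambda>t. det (A t)) 0"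
    by (rule isCont_det) (rule cA)
  ultimately have "isCont (\<lambda>t. C t / det (A t)) 0"
    by (intro continuous_intros)
  with quot show ?thesis using isCont_cong by fastforce
qed

lemma matrix_inv_vector_diff_quotient:
  fixes A B :: "'a::field^'n^'n"
  assumes "invertible A" "invertible B"
  shows "((matrix_inv B *v v) $ k - (matrix_inv A *v u) $ k) / h
       = (\<Sum>a\<in>UNIV. matrix_inv A $ k $ a * ((v $ a - u $ a) / h
            - (\<Sum>c\<in>UNIV. (B $ a $ c - A $ a $ c) / h * (matrix_inv B *v v) $ c)))"
  using arg_cong[OF matrix_inv_vector_diff[OF assms, of v u], of "\<lambda>w. w $ k / h"]
  by (simp add: matrix_vector_mult_def sum_divide_distrib diff_divide_distrib
      times_divide_eq_right right_diff_distrib sum_subtractf sum_distrib_left)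
     (simp add: diff_divide_distrib[symmetric] times_divide_eq_left)

lemma has_field_derivative_matrix_inv_vector:
  fixes A :: "complex \<Rightarrow> complex^'k^'k" and u :: "complex \<Rightarrow> complex^'k"
  assumes dA: "\<And>a c. ((\<lambda>t. A t $ a $ c) has_field_derivative A' $ a $ c) (at 0)"
    and du: "\<And>a. ((\<lambda>t. u t $ a) has_field_derivative u' $ a) (at 0)"
    and inv: "\<forall>\<^sub>F t in nhds 0. invertible (A t)"
  shows "((\<lambda>t. (matrix_inv (A t) *v u t) $ k) has_field_derivative
           (matrix_inv (A 0) *v (u' - A' *v (matrix_inv (A 0) *v u 0))) $ k) (at 0)"
proof -
  define g where "g t = matrix_inv (A t) *v u t" for t
  define B where "B = matrix_inv (A 0)"
  define Q where "Q h = (\<Sum>a\<in>UNIV. B $ k $ a * ((u h $ a - u 0 $ a) / h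
       - (\<Sum>c\<in>UNIV. (A h $ a $ c - A 0 $ a $ c) / h * g h $ c)))" for h
  have A0: "invertible (A 0)"
    using inv eventually_nhds_x_imp_x by blast
  have "\<forall>\<^sub>F h in at 0. invertible (A h)"
    using inv eventually_nhds_conv_at by blast
  then have "\<forall>\<^sub>F h in at 0. Q h = (g h $ k - g 0 $ k) / (h - 0)"
    unfolding Q_def g_def B_def diff_zero
    by (rule eventually_mono) (rule matrix_inv_vector_diff_quotient[OF A0, symmetric])
  moreover have "(Q \<longlongrightarrow> (\<Sum>a\<in>UNIV. B $ k $ a * (u' $ a - (\<Sum>c\<in>UNIV. A' $ a $ c * g 0 $ c)))) (at 0)"
  proof -
    have "isCont (\<lambda>t. g t $ c) 0" for c
      unfolding g_def by (rule isCont_matrix_inv_vector[OF _ _ inv]) (use dA du DERIV_isCont in blast)+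
    then have tg: "((\<lambda>h. g h $ c) \<longlongrightarrow> g 0 $ c) (at 0)" for c
      by (simp add: isCont_def)
    have tu: "((\<lambda>h. (u h $ a - u 0 $ a) / h) \<longlongrightarrow> u' $ a) (at 0)" for a
      using du[of a] unfolding has_field_derivative_iff by simp
    have tA: "((\<lambda>h. (A h $ a $ c - A 0 $ a $ c) / h) \<longlongrightarrow> A' $ a $ c) (at 0)" for a c
      using dA[of a c] unfolding has_field_derivative_iff by simp
    show ?thesis
      unfolding Q_def by (intro tendsto_intros tu tA tg)
  qed
  ultimately have "((\<lambda>h. (g h $ k - g 0 $ k) / (h - 0)) \<longlongrightarrow>
      (\<Sum>a\<in>UNIV. B $ k $ a * (u' $ a - (\<Sum>c\<in>UNIV. A' $ a $ c * g 0 $ c)))) (at 0)"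
    using tendsto_cong by force
  then show ?thesis
    unfolding has_field_derivative_iff g_def B_def by (simp add: matrix_vector_mult_def)
qed

lemma sum_Diff_singleton_if:
  "finite A \<Longrightarrow> sum F (A - {j}) = (\<Sum>k\<in>A. if k = j then 0 else F k)"
  by (simp add: sum.If_cases Diff_eq)

lemma sum_pairs_antisym_eq_0:
  fixes F :: "'n::finite \<Rightarrow> 'n \<Rightarrow> 'a::{idom,ring_char_0}"
  assumes "\<And>i j. i \<noteq> j \<Longrightarrow> F j i = - F i j"
  shows "(\<Sum>i\<in>UNIV. \<Sum>j\<in>UNIV - {i}. F i j) = 0"
proof -
  define S where "S = (\<Sum>i\<in>UNIV. \<Sum>j\<in>UNIV. if j = i then 0 else F i j)"
  have "S = (\<Sum>j\<in>UNIV. \<Sum>i\<in>UNIV. if j = i then 0 else F i j)"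
    unfolding S_def by (rule sum.swap)
  also have "\<dots> = (\<Sum>j\<in>UNIV. \<Sum>i\<in>UNIV. - (if i = j then 0 else F j i))"
  proof (rule sum.cong[OF refl], rule sum.cong[OF refl])
    fix i j show "(if j = i then 0 else F i j) = - (if i = j then 0 else F j i)"
      using assms[of j i] by auto
  qed
  also have "\<dots> = - S" unfolding S_def by (simp add: sum_negf)
  finally have "S = 0" by (simp add: eq_neg_iff_add_eq_0)
  then show ?thesis unfolding S_def by (simp only: sum_Diff_singleton_if finite)
qed

lemma sum_pairs_sym_eq_double:
  fixes G :: "'n::{finite,linorder} \<Rightarrow> 'n \<Rightarrow> 'a::comm_ring_1"
  assumes "\<And>i j. i \<noteq> j \<Longrightarrow> G j i = G i j"
  shows "(\<Sum>i\<in>UNIV. \<Sum>j\<in>UNIV - {i}. G i j) = 2 * (\<Sum>i\<in>UNIV. \<Sum>j\<in>{j. i < j}. G i j)"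
proof -
  have "(\<Sum>i\<in>UNIV. \<Sum>j\<in>UNIV. if j = i then 0 else G i j)
     = (\<Sum>i\<in>UNIV. \<Sum>j\<in>UNIV. (if i < j then G i j else 0) + (if j < i then G i j else 0))"
    by (rule sum.cong[OF refl], rule sum.cong[OF refl]) auto
  also have "\<dots> = (\<Sum>i\<in>UNIV. \<Sum>j\<in>UNIV. if i < j then G i j else 0)
       + (\<Sum>i\<in>UNIV. \<Sum>j\<in>UNIV. if j < i then G i j else 0)"
    by (simp add: sum.distrib)
  also have "(\<Sum>i\<in>UNIV. \<Sum>j\<in>UNIV. if j < i then G i j else 0)
      = (\<Sum>j\<in>UNIV. \<Sum>i\<in>UNIV. if j < i then G i j else 0)"
    by (rule sum.swap)
  also have "\<dots> = (\<Sum>j\<in>UNIV. \<Sum>i\<in>UNIV. if j < i then G j i else 0)"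
  proof (rule sum.cong[OF refl], rule sum.cong[OF refl])
    fix i j show "(if j < i then G i j else 0) = (if j < i then G j i else 0)"
      using assms[of j i] by auto
  qed
  finally have "(\<Sum>i\<in>UNIV. \<Sum>j\<in>UNIV - {i}. G i j)
      = 2 * (\<Sum>i\<in>UNIV. \<Sum>j\<in>UNIV. if i < j then G i j else 0)"
    by (simp only: sum_Diff_singleton_if finite mult_2)
  moreover have "(\<Sum>j\<in>{j. i < j}. G i j) = (\<Sum>j\<in>UNIV. if i < j then G i j else 0)" for i
    by (simp add: sum.If_cases)
  ultimately show ?thesis by simp
qed

lemma sum_triples_cyclic_eq_0:
  fixes H :: "'n::finite \<Rightarrow> 'n \<Rightarrow> 'n \<Rightarrow> 'a::{idom,ring_char_0}"
  assumes "\<And>i j k. i \<noteq> j \<Longrightarrow> i \<noteq> k \<Longrightarrow> j \<noteq> k \<Longrightarrow> H i j k + H j k i + H k i j = 0"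
  shows "(\<Sum>i\<in>UNIV. \<Sum>j\<in>UNIV - {i}. \<Sum>k\<in>UNIV - {i} - {j}. H i j k) = 0"
proof -
  define X where "X i j k = (if i \<noteq> j \<and> i \<noteq> k \<and> j \<noteq> k then H i j k else 0)" for i j k
  define S where "S = (\<Sum>i\<in>UNIV. \<Sum>j\<in>UNIV. \<Sum>k\<in>UNIV. X i j k)"
  have rotate: "(\<Sum>i\<in>UNIV. \<Sum>j\<in>UNIV. \<Sum>k\<in>UNIV. Y i j k) = (\<Sum>i\<in>UNIV. \<Sum>j\<in>UNIV. \<Sum>k\<in>UNIV. Y k i j)"
    for Y :: "'n \<Rightarrow> 'n \<Rightarrow> 'n \<Rightarrow> 'a"
    by (subst sum.swap) (intro sum.cong refl sum.swap)
  have "3 * S = (\<Sum>i\<in>UNIV. \<Sum>j\<in>UNIV. \<Sum>k\<in>UNIV. X i j k + X j k i + X k i j)"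
    unfolding sum.distrib S_def using rotate[of X] rotate[of "\<lambda>i j k. X k i j"] by simp
  also have "\<dots> = 0"
    by (intro sum.neutral ballI) (auto simp: X_def assms)
  finally have "S = 0" by simp
  have inner: "(\<Sum>k\<in>UNIV - {i} - {j}. H i j k) = (\<Sum>k\<in>UNIV. X i j k)" if "j \<noteq> i" for i j
    using that by (simp add: sum_Diff_singleton_if X_def) (intro sum.cong refl; auto)
  have row: "(\<Sum>j\<in>UNIV - {i}. \<Sum>k\<in>UNIV - {i} - {j}. H i j k) = (\<Sum>j\<in>UNIV. \<Sum>k\<in>UNIV. X i j k)"
    for i
  proof -
    have "(\<Sum>j\<in>UNIV - {i}. \<Sum>k\<in>UNIV - {i} - {j}. H i j k) = (\<Sum>j\<in>UNIV - {i}. \<Sum>k\<in>UNIV. X i j k)"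
      by (rule sum.cong[OF refl]) (use inner in auto)
    also have "\<dots> = (\<Sum>j\<in>UNIV. \<Sum>k\<in>UNIV. X i j k)"
      by (rule sum.mono_neutral_left) (auto simp: X_def)
    finally show ?thesis .
  qed
  show ?thesis unfolding row S_def[symmetric] by (fact \<open>S = 0\<close>)
qed

section \<open>The coefficients \<open>c\<^sub>i\<^sub>j\<close>\<close>

abbreviation tr :: "'n \<Rightarrow> 'n \<Rightarrow> 'n \<Rightarrow> 'n" where "tr \<equiv> Transposition.transpose"

lemma act_tr_fst [simp]: "act y (tr i j) $ i = y $ j"
  by (simp add: act_def)

lemma act_tr_snd [simp]: "act y (tr i j) $ j = y $ i"
  by (simp add: act_def)

lemma act_tr_other [simp]: "k \<noteq> i \<Longrightarrow> k \<noteq> j \<Longrightarrow> act y (tr i j) $ k = y $ k"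
  by (simp add: act_def)

lemma act_act: "act (act x w1) w2 = act x (w1 \<circ> w2)"
  by (simp add: act_def vec_eq_iff)

lemma act_id: "act x id = x"
  by (simp add: act_def vec_eq_iff)

lemma act_tr_line: "act (y + t *s axis i 1) (tr i j) = act y (tr i j) + t *s axis j 1"
  by (simp add: act_def vec_eq_iff axis_def Transposition.transpose_def)

lemma tr_permutes: "tr i j permutes UNIV"
  by (rule permutes_swap_id) auto

definition kz_coeff :: "'n::{finite,linorder} \<Rightarrow> 'n::{finite,linorder} \<Rightarrow> complex^'n::{finite,linorder} \<Rightarrow> complex" where
  "kz_coeff i j y = (if i < j then 1 else 0) - y $ i / (y $ i - y $ j)"

lemma kz_coeff_antisym:
  assumes "i \<noteq> j" "x $ i \<noteq> x $ j"
  shows "kz_coeff j i x = - kz_coeff i j x"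
proof -
  have "x $ i / (x $ i - x $ j) - x $ j / (x $ i - x $ j) = 1"
    using assms(2) by (simp add: diff_divide_distrib[symmetric])
  moreover have "x $ j / (x $ j - x $ i) = - (x $ j / (x $ i - x $ j))"
    by (metis minus_diff_eq divide_minus_right)
  ultimately have "x $ j / (x $ j - x $ i) + x $ i / (x $ i - x $ j) = 1"
    by simp
  then show ?thesis
    unfolding kz_coeff_def using assms(1) by (cases "i < j") (auto simp: algebra_simps)
qed

lemma kz_coeff_mult_swap:
  assumes "x $ i \<noteq> x $ j"
  shows "kz_coeff i j x * kz_coeff i j (act x (tr i j)) = - (x $ i * x $ j / (x $ i - x $ j)\<^sup>2)"
proof -
  define u where "u = x $ i - x $ j"
  have "u \<noteq> 0" "x $ j - x $ i = - u" "x $ i = x $ j + u"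
    using assms by (auto simp: u_def)
  then show ?thesis unfolding kz_coeff_def act_tr_fst u_def[symmetric]
    by (cases "i < j") (simp_all add: field_simps power2_eq_square)
qed

lemma has_pds_kz_coeff:
  assumes "i \<noteq> j" "x $ i \<noteq> x $ j"
  shows "has_pds i (kz_coeff i j) x (x $ j / (x $ i - x $ j)\<^sup>2)"
proof -
  have "(\<lambda>t. kz_coeff i j (x + t *s axis i 1))
      = (\<lambda>t. (if i < j then 1 else 0) - (x $ i + t) / (x $ i + t - x $ j))"
    using assms(1) by (simp add: kz_coeff_def axis_def)
  moreover have "((\<lambda>t. (if i < j then 1 else 0) - (x $ i + t) / (x $ i + t - x $ j)) has_field_derivative
      x $ j / (x $ i - x $ j)\<^sup>2) (at 0)"
    using assms(2) by (auto intro!: derivative_eq_intros simp: field_simps power2_eq_square)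
  ultimately show ?thesis unfolding has_pds_def by simp
qed

lemma cyclic_quotient_identity:
  fixes a b c :: "'a::field"
  assumes "a \<noteq> b" "b \<noteq> c" "c \<noteq> a"
  shows "a/(a-b) * (b/(b-c)) + b/(b-c) * (c/(c-a)) + c/(c-a) * (a/(a-b))
       = a/(a-b) + b/(b-c) + c/(c-a) - 1"
proof -
  define u v w where "u = a - b" and "v = b - c" and "w = c - a"
  have "u \<noteq> 0" "v \<noteq> 0" "w \<noteq> 0" using assms by (auto simp: u_def v_def w_def)
  moreover have "a * b * w + b * c * u + c * a * v = a * v * w + b * u * w + c * u * v - u * v * w"
    unfolding u_def v_def w_def by (simp add: algebra_simps)
  ultimately show ?thesis unfolding u_def[symmetric] v_def[symmetric] w_def[symmetric]
    by (simp add: field_simps)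
qed

lemma kz_coeff_cyclic:
  fixes x :: "complex^'n::{finite,linorder}"
  assumes ne: "i \<noteq> j" "i \<noteq> k" "j \<noteq> k" "x $ i \<noteq> x $ j" "x $ i \<noteq> x $ k" "x $ j \<noteq> x $ k"
  shows "kz_coeff i j x * kz_coeff i k (act x (tr i j)) + kz_coeff j k x * kz_coeff j i (act x (tr j k))
       + kz_coeff k i x * kz_coeff k j (act x (tr k i)) = 0"
proof -
  define A where "A = x $ i / (x $ i - x $ j)"
  define B where "B = x $ j / (x $ j - x $ k)"
  define C where "C = x $ k / (x $ k - x $ i)"
  have ABC: "A * B + B * C + C * A = A + B + C - 1"
    using ne unfolding A_def B_def C_def by (intro cyclic_quotient_identity) auto
  have coeffs: "kz_coeff i j x = (if i < j then 1 else 0) - A" "kz_coeff j k x = (if j < k then 1 else 0) - B"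
    "kz_coeff k i x = (if i < k then 0 else 1) - C" "kz_coeff i k (act x (tr i j)) = (if i < k then 1 else 0) - B"
    "kz_coeff j i (act x (tr j k)) = (if i < j then 0 else 1) - C"
    "kz_coeff k j (act x (tr k i)) = (if j < k then 0 else 1) - A"
    using ne by (auto simp: kz_coeff_def A_def B_def C_def)
  have "\<not> (\<not> i < j \<and> i < k \<and> \<not> j < k)" "\<not> (i < j \<and> \<not> i < k \<and> j < k)"
    using ne by (auto simp: not_less_iff_gr_or_eq)
  then show ?thesis
    unfolding coeffs using ABC by (cases "i < j"; cases "i < k"; cases "j < k") (simp_all add: algebra_simps)
qed

lemma kz_coeff_sum_collect:
  fixes y :: "complex^'n::{finite,linorder}" and P S :: "'n \<Rightarrow> complex" and k :: complex
  assumes ne: "\<And>j. j \<noteq> i \<Longrightarrow> y $ i \<noteq> y $ j"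
  shows "(\<Sum>j\<in>UNIV - {i}. k * y $ i * P j / (y $ i - y $ j) - k * y $ j * S j / (y $ i - y $ j))
      - (\<Sum>j\<in>{j. j < i}. k * S j) - y $ i * k * (\<Sum>j\<in>UNIV - {i}. P j / (y $ i - y $ j))
    = k * (\<Sum>j\<in>UNIV - {i}. kz_coeff i j y * S j)"
proof -
  have lower: "(\<Sum>j\<in>{j. j < i}. k * S j) = (\<Sum>j\<in>UNIV - {i}. if j < i then k * S j else 0)"
    by (simp add: sum.inter_filter[symmetric]) (metis less_irrefl)
  have summand: "k * y $ i * P j / (y $ i - y $ j) - k * y $ j * S j / (y $ i - y $ j)
      - (if j < i then k * S j else 0) - y $ i * k * (P j / (y $ i - y $ j)) = k * (kz_coeff i j y * S j)"
    if "j \<in> UNIV - {i}" for j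
  proof -
    define q where "q = y $ i / (y $ i - y $ j)"
    have "y $ i - y $ j \<noteq> 0" using ne that by auto
    then have "k * y $ j * S j / (y $ i - y $ j) = k * S j * (q - 1)"
      by (simp add: q_def field_simps)
    moreover have "k * y $ i * P j / (y $ i - y $ j) = k * P j * q"
      "y $ i * (P j / (y $ i - y $ j)) = P j * q"
      by (simp_all add: q_def)
    ultimately show ?thesis
      using that by (auto simp: kz_coeff_def q_def[symmetric] algebra_simps not_less_iff_gr_or_eq)
  qed
  show ?thesis
    unfolding lower sum_distrib_left sum_subtractf[symmetric] by (rule sum.cong[OF refl]) (rule summand)
qed

lemma kz_pair_term:
  fixes x :: "complex^'n::{finite,linorder}" and k fz b dij dji :: complex and e :: "'n \<Rightarrow> complex"
  assumes ij: "i \<noteq> j" "x $ i \<noteq> x $ j" and ejj: "e j = fz"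
  shows "x $ i * (k * (x $ j / (x $ i - x $ j)\<^sup>2 * b + kz_coeff i j x * dji))
      + k * (kz_coeff i j x * (x $ j * dij + k * (\<Sum>l\<in>UNIV - {i}. kz_coeff i l (act x (tr i j)) * e l)))
    = k * (x $ i * x $ j / (x $ i - x $ j)\<^sup>2 * (b - k * fz))
      + k * (kz_coeff i j x * (x $ i * dji + x $ j * dij))
      + k * k * (\<Sum>l\<in>UNIV - {i} - {j}. kz_coeff i j x * kz_coeff i l (act x (tr i j)) * e l)"
proof -
  have "(\<Sum>l\<in>UNIV - {i}. kz_coeff i l (act x (tr i j)) * e l)
      = kz_coeff i j (act x (tr i j)) * fz + (\<Sum>l\<in>UNIV - {i} - {j}. kz_coeff i l (act x (tr i j)) * e l)"
    using sum.remove[of "UNIV - {i}" j "\<lambda>l. kz_coeff i l (act x (tr i j)) * e l"] ij ejj by simp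
  moreover define r where "r = x $ j / (x $ i - x $ j)\<^sup>2"
  then have rq: "x $ i * x $ j / (x $ i - x $ j)\<^sup>2 = x $ i * r"
    and "kz_coeff i j x * kz_coeff i j (act x (tr i j)) = - (x $ i * r)"
    using kz_coeff_mult_swap[OF ij(2)] by simp_all
  ultimately show ?thesis
    unfolding rq r_def[symmetric] by (simp add: algebra_simps sum_distrib_left)
qed

lemma sum_kz_coeff_antisym_eq_0:
  fixes x :: "complex^'n::{finite,linorder}" and d :: "'n \<Rightarrow> 'n \<Rightarrow> complex"
  assumes ne: "\<And>i j. i \<noteq> j \<Longrightarrow> x $ i \<noteq> x $ j"
  shows "(\<Sum>i\<in>UNIV. \<Sum>j\<in>UNIV - {i}. kz_coeff i j x * (x $ i * d j i + x $ j * d i j)) = 0"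
proof (rule sum_pairs_antisym_eq_0)
  fix i j :: 'n assume "i \<noteq> j"
  then have "kz_coeff j i x = - kz_coeff i j x" using kz_coeff_antisym ne by blast
  then show "kz_coeff j i x * (x $ j * d i j + x $ i * d j i) = - (kz_coeff i j x * (x $ i * d j i + x $ j * d i j))"
    by (simp add: algebra_simps)
qed

lemma sum_kz_coeff_cyclic_eq_0:
  fixes x :: "complex^'n::{finite,linorder}" and e :: "'n \<Rightarrow> 'n \<Rightarrow> 'n \<Rightarrow> complex"
  assumes ne: "\<And>i j. i \<noteq> j \<Longrightarrow> x $ i \<noteq> x $ j"
    and e_cyclic: "\<And>i j l. i \<noteq> j \<Longrightarrow> i \<noteq> l \<Longrightarrow> j \<noteq> l \<Longrightarrow> e j l i = e i j l"
  shows "(\<Sum>i\<in>UNIV. \<Sum>j\<in>UNIV - {i}. \<Sum>l\<in>UNIV - {i} - {j}.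
            kz_coeff i j x * kz_coeff i l (act x (tr i j)) * e i j l) = 0"
proof (rule sum_triples_cyclic_eq_0)
  fix i j l :: 'n assume d: "i \<noteq> j" "i \<noteq> l" "j \<noteq> l"
  then have "e j l i = e i j l" "e l i j = e i j l" using e_cyclic by metis+
  then have "kz_coeff i j x * kz_coeff i l (act x (tr i j)) * e i j l
      + kz_coeff j l x * kz_coeff j i (act x (tr j l)) * e j l i
      + kz_coeff l i x * kz_coeff l j (act x (tr l i)) * e l i j
    = (kz_coeff i j x * kz_coeff i l (act x (tr i j)) + kz_coeff j l x * kz_coeff j i (act x (tr j l))
       + kz_coeff l i x * kz_coeff l j (act x (tr l i))) * e i j l"
    by (simp add: algebra_simps)
  also have "\<dots> = 0" using kz_coeff_cyclic[OF d ne ne ne] d by simp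
  finally show "kz_coeff i j x * kz_coeff i l (act x (tr i j)) * e i j l
      + kz_coeff j l x * kz_coeff j i (act x (tr j l)) * e j l i
      + kz_coeff l i x * kz_coeff l j (act x (tr l i)) * e l i j = 0" .
qed

lemma kz_square_sum_identity:
  fixes x :: "complex^'n::{finite,linorder}" and k fz :: complex and p :: "'n \<Rightarrow> complex"
    and b d :: "'n \<Rightarrow> 'n \<Rightarrow> complex" and e :: "'n \<Rightarrow> 'n \<Rightarrow> 'n \<Rightarrow> complex"
  assumes ne: "\<And>i j. i \<noteq> j \<Longrightarrow> x $ i \<noteq> x $ j"
    and b_sym: "\<And>i j. b j i = b i j"
    and e_diag: "\<And>i j. i \<noteq> j \<Longrightarrow> e i j j = fz"
    and e_cyclic: "\<And>i j l. i \<noteq> j \<Longrightarrow> i \<noteq> l \<Longrightarrow> j \<noteq> l \<Longrightarrow> e j l i = e i j l"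
  shows "(\<Sum>i\<in>UNIV. x $ i * (p i + k * (\<Sum>j\<in>UNIV - {i}. x $ j / (x $ i - x $ j)\<^sup>2 * b i j + kz_coeff i j x * d j i))
          + k * (\<Sum>j\<in>UNIV - {i}. kz_coeff i j x * (x $ j * d i j
               + k * (\<Sum>l\<in>UNIV - {i}. kz_coeff i l (act x (tr i j)) * e i j l))))
      = (\<Sum>i\<in>UNIV. x $ i * p i) - 2 * k * (\<Sum>i\<in>UNIV. \<Sum>j\<in>{j. i < j}.
            x $ i * x $ j / (x $ i - x $ j)\<^sup>2 * (k * fz - b i j))"
    (is "?lhs = ?rhs")
proof -
  define Q where "Q i j = x $ i * x $ j / (x $ i - x $ j)\<^sup>2 * (b i j - k * fz)" for i j
  define F where "F i j = kz_coeff i j x * (x $ i * d j i + x $ j * d i j)" for i j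
  define H where "H i j l = kz_coeff i j x * kz_coeff i l (act x (tr i j)) * e i j l" for i j l
  have "(\<Sum>i\<in>UNIV. \<Sum>j\<in>UNIV - {i}. F i j) = 0"
    unfolding F_def by (rule sum_kz_coeff_antisym_eq_0[OF ne])
  moreover have "(\<Sum>i\<in>UNIV. \<Sum>j\<in>UNIV - {i}. \<Sum>l\<in>UNIV - {i} - {j}. H i j l) = 0"
    unfolding H_def by (rule sum_kz_coeff_cyclic_eq_0[OF ne e_cyclic])
  moreover have "(\<Sum>i\<in>UNIV. \<Sum>j\<in>UNIV - {i}. Q i j) = 2 * (\<Sum>i\<in>UNIV. \<Sum>j\<in>{j. i < j}. Q i j)"
    by (rule sum_pairs_sym_eq_double) (simp add: Q_def b_sym power2_commute mult.commute)
  moreover have "x $ i * (p i + k * (\<Sum>j\<in>UNIV - {i}. x $ j / (x $ i - x $ j)\<^sup>2 * b i j + kz_coeff i j x * d j i))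
      + k * (\<Sum>j\<in>UNIV - {i}. kz_coeff i j x * (x $ j * d i j
           + k * (\<Sum>l\<in>UNIV - {i}. kz_coeff i l (act x (tr i j)) * e i j l)))
    = x $ i * p i + (\<Sum>j\<in>UNIV - {i}. k * Q i j + k * F i j + k * k * (\<Sum>l\<in>UNIV - {i} - {j}. H i j l))"
    for i
  proof -
    have "(\<Sum>j\<in>UNIV - {i}. k * Q i j + k * F i j + k * k * (\<Sum>l\<in>UNIV - {i} - {j}. H i j l))
      = (\<Sum>j\<in>UNIV - {i}. x $ i * (k * (x $ j / (x $ i - x $ j)\<^sup>2 * b i j + kz_coeff i j x * d j i))
          + k * (kz_coeff i j x * (x $ j * d i j
             + k * (\<Sum>l\<in>UNIV - {i}. kz_coeff i l (act x (tr i j)) * e i j l))))"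
      unfolding Q_def F_def H_def by (intro sum.cong refl kz_pair_term[symmetric]) (auto simp: ne e_diag)
    then show ?thesis by (simp add: sum.distrib sum_distrib_left distrib_left)
  qed
  then have "?lhs = (\<Sum>i\<in>UNIV. x $ i * p i) + k * (\<Sum>i\<in>UNIV. \<Sum>j\<in>UNIV - {i}. Q i j)
      + k * (\<Sum>i\<in>UNIV. \<Sum>j\<in>UNIV - {i}. F i j)
      + k * k * (\<Sum>i\<in>UNIV. \<Sum>j\<in>UNIV - {i}. \<Sum>l\<in>UNIV - {i} - {j}. H i j l)"
    by (simp add: sum.distrib sum_distrib_left)
  ultimately have "?lhs = (\<Sum>i\<in>UNIV. x $ i * p i) + 2 * k * (\<Sum>i\<in>UNIV. \<Sum>j\<in>{j. i < j}. Q i j)"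
    by simp
  also have "\<dots> = ?rhs"
  proof -
    have "(\<Sum>i\<in>UNIV. \<Sum>j\<in>{j. i < j}. x $ i * x $ j / (x $ i - x $ j)\<^sup>2 * (k * fz - b i j))
        = - (\<Sum>i\<in>UNIV. \<Sum>j\<in>{j. i < j}. Q i j)"
      unfolding Q_def sum_negf[symmetric] by (intro sum.cong refl) (simp add: right_diff_distrib)
    then show ?thesis by simp
  qed
  finally show ?thesis .
qed

section \<open>Conjugation by \<open>L\<close>\<close>

text \<open>\<open>Wop \<kappa> M i\<close> is the operator \<open>W\<^sub>i = L (\<U>\<^sub>i - 1 - \<kappa>\<gamma>) L\<^sup>-\<^sup>1\<close>, see \<open>Uop_conj\<close>.\<close>
definition Wop :: "real \<Rightarrow> (('n::{finite,linorder} \<Rightarrow> 'n::{finite,linorder}) \<Rightarrow> complex^'n::{finite,linorder} \<Rightarrow> complex^'k^'k)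
    \<Rightarrow> 'n::{finite,linorder} \<Rightarrow> (complex^'n::{finite,linorder} \<Rightarrow> complex^'k) \<Rightarrow> complex^'n::{finite,linorder} \<Rightarrow> complex^'k" where
  "Wop \<kappa> M i \<phi> y = y $ i *s pd i \<phi> y
     + complex_of_real \<kappa> *s (\<Sum>j\<in>UNIV - {i}. kz_coeff i j y *s sigmaM M (tr i j) \<phi> y)"

locale kz_system =
  fixes rho :: "('n::{finite,linorder} \<Rightarrow> 'n::{finite,linorder}) \<Rightarrow> complex^'k::finite^'k"
    and \<kappa> :: real and \<Omega> :: "(complex^'n::{finite,linorder}) set"
    and L :: "complex^'n::{finite,linorder} \<Rightarrow> complex^'k::finite^'k"
    and M :: "('n::{finite,linorder} \<Rightarrow> 'n::{finite,linorder}) \<Rightarrow> complex^'n::{finite,linorder} \<Rightarrow> complex^'k::finite^'k"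
    and \<gamma> :: real
  assumes \<Omega>_open: "open \<Omega>"
    and \<Omega>_reg: "\<Omega> \<subseteq> regular"
    and \<Omega>_inv: "\<And>w. w permutes UNIV \<Longrightarrow> (\<lambda>y. act y w) ` \<Omega> = \<Omega>"
    and L_holo: "holo_mat L \<Omega>"
    and L_inv: "\<And>y. y \<in> \<Omega> \<Longrightarrow> invertible (L y)"
    and L_pde: "\<And>y i. y \<in> \<Omega> \<Longrightarrow>
       pdm i L y = \<kappa> *\<^sub>R (L y **
         ((\<Sum>j\<in>UNIV - {i}. mat (1 / (y $ i - y $ j)) ** rho (Transposition.transpose i j))
          - mat (complex_of_real \<gamma> / y $ i)))"
    and M_lc: "\<And>w y. w permutes UNIV \<Longrightarrow> y \<in> \<Omega> \<Longrightarrow>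
       \<exists>e>0. \<forall>z\<in>\<Omega>. dist z y < e \<longrightarrow> M w z = M w y"
    and M_GL: "\<And>w y. w permutes UNIV \<Longrightarrow> y \<in> \<Omega> \<Longrightarrow> invertible (M w y)"
    and M_id: "\<And>y. y \<in> \<Omega> \<Longrightarrow> M id y = mat 1"
    and M_cocycle: "\<And>w1 w2 y. w1 permutes UNIV \<Longrightarrow> w2 permutes UNIV \<Longrightarrow> y \<in> \<Omega> \<Longrightarrow>
       M (w1 \<circ> w2) y = M w2 (act y w1) ** M w1 y"
    and L_equiv: "\<And>w y. w permutes UNIV \<Longrightarrow> y \<in> \<Omega> \<Longrightarrow>
       L (act y w) = M w y ** L y ** rho w"
begin

lemma act_in_\<Omega>: "y \<in> \<Omega> \<Longrightarrow> w permutes UNIV \<Longrightarrow> act y w \<in> \<Omega>"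
  using \<Omega>_inv by blast

lemma \<Omega>_coord_distinct: "y \<in> \<Omega> \<Longrightarrow> i \<noteq> j \<Longrightarrow> y $ i \<noteq> y $ j"
  using \<Omega>_reg unfolding regular_def by blast

lemma \<Omega>_coord_nonzero: "y \<in> \<Omega> \<Longrightarrow> y $ i \<noteq> 0"
  using \<Omega>_reg unfolding regular_def by blast

lemma eventually_line_in_\<Omega>:
  assumes "y \<in> \<Omega>"
  shows "\<forall>\<^sub>F t in nhds 0. y + t *s axis i 1 \<in> \<Omega>"
  using eventually_nhds_in_open[OF open_line_vimage[OF \<Omega>_open]] assms by simp

lemma eventually_M_line_const:
  assumes y: "y \<in> \<Omega>" and w: "w permutes UNIV"
  shows "\<forall>\<^sub>F t in nhds 0. M w (y + t *s axis i 1) = M w y"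
proof -
  obtain e where e: "e > 0" "\<And>z. z \<in> \<Omega> \<Longrightarrow> dist z y < e \<Longrightarrow> M w z = M w y"
    using M_lc[OF w y] by blast
  have "\<forall>\<^sub>F t in nhds 0. y + t *s axis i 1 \<in> \<Omega> \<inter> ball y e"
    using eventually_nhds_in_open[OF open_line_vimage[OF open_Int[OF \<Omega>_open open_ball]]] y e(1)
    by simp
  then show ?thesis
    by eventually_elim (use e(2) in \<open>auto simp: dist_commute\<close>)
qed

lemma sigmaM_comp:
  assumes y: "y \<in> \<Omega>" and w1: "w1 permutes UNIV" and w2: "w2 permutes UNIV"
  shows "sigmaM M w1 (sigmaM M w2 f) y = sigmaM M (w1 \<circ> w2) f y"
  unfolding sigmaM_def M_cocycle[OF w1 w2 y] act_act
  by (rule matrix_inv_mult_vector[symmetric]) (rule M_GL[OF w2 act_in_\<Omega>[OF y w1]], rule M_GL[OF w1 y])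

lemma sigmaM_tr_involutive:
  assumes "y \<in> \<Omega>"
  shows "sigmaM M (tr i j) (sigmaM M (tr i j) f) y = f y"
  using sigmaM_comp[OF assms tr_permutes tr_permutes]
  by (simp add: sigmaM_def act_id M_id[OF assms] matrix_inv_mat_1_vector)

lemma has_pd_matrix_inv_L:
  assumes y: "y \<in> \<Omega>" and \<phi>: "has_pd i \<phi> y \<phi>'"
  shows "has_pd i (\<lambda>z. matrix_inv (L z) *v \<phi> z) y
     (matrix_inv (L y) *v (\<phi>' - pdm i L y *v (matrix_inv (L y) *v \<phi> y)))"
proof -
  have inv: "\<forall>\<^sub>F t in nhds 0. invertible (L (y + t *s axis i 1))"
    using eventually_line_in_\<Omega>[OF y] by eventually_elim (rule L_inv)
  have dL: "((\<lambda>t. L (y + t *s axis i 1) $ a $ c) has_field_derivative pdm i L y $ a $ c) (at 0)" for a c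
    using holo_mat_has_pdm[OF L_holo y, of i] unfolding has_pdm_def by blast
  have d\<phi>: "((\<lambda>t. \<phi> (y + t *s axis i 1) $ a) has_field_derivative \<phi>' $ a) (at 0)" for a
    using \<phi> unfolding has_pd_def by blast
  show ?thesis
    unfolding has_pd_def using has_field_derivative_matrix_inv_vector[OF dL d\<phi> inv] by simp
qed

lemma has_pd_sigmaM:
  assumes y: "y \<in> \<Omega>" and \<phi>: "has_pd j \<phi> (act y (tr i j)) \<phi>'"
  shows "has_pd i (sigmaM M (tr i j) \<phi>) y (matrix_inv (M (tr i j) y) *v \<phi>')"
proof (rule has_pd_cong_ev)
  show "\<forall>\<^sub>F t in nhds 0. matrix_inv (M (tr i j) y) *v \<phi> (act (y + t *s axis i 1) (tr i j)) =
      sigmaM M (tr i j) \<phi> (y + t *s axis i 1)"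
    using eventually_M_line_const[OF y tr_permutes, of i j i] by eventually_elim (simp add: sigmaM_def)
  show "has_pd i (\<lambda>z. matrix_inv (M (tr i j) y) *v \<phi> (act z (tr i j))) y (matrix_inv (M (tr i j) y) *v \<phi>')"
    using \<phi> by (intro has_pd_matrix_vector_mult) (simp add: has_pd_def act_tr_line)
qed


lemma L_rho_intertwines_sigmaM:
  assumes y: "y \<in> \<Omega>" and w: "w permutes UNIV"
  shows "L y *v (rho w *v (matrix_inv (L (act y w)) *v \<phi> (act y w))) = sigmaM M w \<phi> y"
proof -
  have "M w y *v (L y *v (rho w *v (matrix_inv (L (act y w)) *v \<phi> (act y w)))) = \<phi> (act y w)"
    using matrix_vector_mult_matrix_inv[OF L_inv[OF act_in_\<Omega>[OF y w]]]
    unfolding L_equiv[OF w y] by (simp add: matrix_vector_mul_assoc matrix_mul_assoc)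
  then show ?thesis
    unfolding sigmaM_def using matrix_vector_mult_eq_iff_matrix_inv[OF M_GL[OF w y]] by blast
qed

lemma Uop_conj:
  assumes y: "y \<in> \<Omega>" and \<phi>: "has_pd i \<phi> y \<phi>'"
  shows "L y *v (Uop \<kappa> rho i (\<lambda>z. matrix_inv (L z) *v \<phi> z) y
            - (1 + complex_of_real (\<kappa> * \<gamma>)) *s (matrix_inv (L y) *v \<phi> y))
       = y $ i *s \<phi>' + complex_of_real \<kappa> *s
           (\<Sum>j\<in>UNIV - {i}. kz_coeff i j y *s sigmaM M (tr i j) \<phi> y)"
proof -
  define g where "g z = matrix_inv (L z) *v \<phi> z" for z
  define L' where "L' = pdm i L y"
  define g' where "g' = matrix_inv (L y) *v (\<phi>' - L' *v g y)"
  define P where "P j = L y *v (rho (tr i j) *v g y)" for j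
  define S where "S j = sigmaM M (tr i j) \<phi> y" for j
  have "has_pd i g y g'"
    unfolding g_def g'_def L'_def using has_pd_matrix_inv_L[OF y \<phi>] by simp
  then have "pd i (\<lambda>z. z $ i *s g z) y = g y + y $ i *s g'"
    using has_pd_imp_pd[OF has_pd_mult[OF has_pds_coordinate]] by simp
  moreover have Lg: "L y *v g y = \<phi> y" "L y *v g' = \<phi>' - L' *v g y"
    unfolding g_def g'_def by (simp_all add: matrix_vector_mult_matrix_inv L_inv[OF y])
  moreover have "L y *v (rho (tr i j) *v g (act y (tr i j))) = S j" for j
    unfolding g_def S_def by (rule L_rho_intertwines_sigmaM[OF y tr_permutes])
  ultimately have U: "L y *v Uop \<kappa> rho i g y =
      (\<phi> y + y $ i *s (\<phi>' - L' *v g y))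
      + (\<Sum>j\<in>UNIV - {i}. (complex_of_real \<kappa> / (y $ i - y $ j)) *s (y $ i *s P j - y $ j *s S j))
      - (\<Sum>j\<in>{j. j < i}. complex_of_real \<kappa> *s S j)"
    unfolding Uop_def Dop_def
    by (simp add: matrix_vector_right_distrib matrix_vector_mult_diff_distrib
        matrix_vector_mult_sum_right vector_scalar_commute P_def)
  have L'g: "L' *v g y = complex_of_real \<kappa> *s
      ((\<Sum>j\<in>UNIV - {i}. (1 / (y $ i - y $ j)) *s P j) - (complex_of_real \<gamma> / y $ i) *s \<phi> y)"
    unfolding L'_def L_pde[OF y] scaleR_matrix_vector_mult matrix_vector_mul_assoc[symmetric]
      matrix_vector_mult_diff_rdistrib matrix_vector_mult_sum_left mat_mult_matrix_vector_mult
      mat_matrix_vector_mult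
    by (simp add: P_def matrix_vector_mult_sum_right matrix_vector_mult_diff_distrib
        vector_scalar_commute Lg)
  show ?thesis
    unfolding g_def[symmetric] matrix_vector_mult_diff_distrib U vector_scalar_commute Lg L'g
    using \<Omega>_coord_nonzero[OF y, of i] \<Omega>_coord_distinct[OF y, of i]
    by (simp add: vec_eq_iff S_def[symmetric] kz_coeff_sum_collect)
qed

lemma Uop_cong:
  assumes eq: "\<And>z. z \<in> \<Omega> \<Longrightarrow> g1 z = g2 z" and y: "y \<in> \<Omega>"
  shows "Uop \<kappa> rho i g1 y = Uop \<kappa> rho i g2 y"
proof -
  have "pd i (\<lambda>z. z $ i *s g1 z) y = pd i (\<lambda>z. z $ i *s g2 z) y"
    unfolding pd_def
  proof (intro arg_cong[where f=vec_lambda] ext deriv_cong_ev refl)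
    show "\<forall>\<^sub>F t in nhds 0. ((y + t *s axis i 1) $ i *s g1 (y + t *s axis i 1)) $ a =
        ((y + t *s axis i 1) $ i *s g2 (y + t *s axis i 1)) $ a" for a
      using eventually_line_in_\<Omega>[OF y, of i] by eventually_elim (simp add: eq)
  qed
  then show ?thesis
    unfolding Uop_def Dop_def by (simp add: eq[OF y] eq[OF act_in_\<Omega>[OF y tr_permutes]])
qed


abbreviation Vop :: "'n \<Rightarrow> (complex^'n::{finite,linorder} \<Rightarrow> complex^'k) \<Rightarrow> complex^'n::{finite,linorder} \<Rightarrow> complex^'k" where
  "Vop i g y \<equiv> Uop \<kappa> rho i g y - (1 + complex_of_real (\<kappa> * \<gamma>)) *s g y"

lemma Vop_matrix_inv_L:
  assumes f: "holo_vec f \<Omega>" and y: "y \<in> \<Omega>"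
  shows "Vop i (\<lambda>z. matrix_inv (L z) *v f z) y = matrix_inv (L y) *v Wop \<kappa> M i f y"
  using Uop_conj[OF y holo_along_has_pd[OF holo_vec_imp_holo_along[OF f] y]]
    matrix_vector_mult_eq_iff_matrix_inv[OF L_inv[OF y]]
  unfolding Wop_def by (simp add: vector_scalar_commute)

lemma has_pd_Wop:
  assumes f: "holo_vec f \<Omega>" and x: "x \<in> \<Omega>"
  shows "has_pd i (Wop \<kappa> M i f) x (pd i (\<lambda>y. y $ i *s pd i f y) x
     + complex_of_real \<kappa> *s (\<Sum>j\<in>UNIV - {i}. (x $ j / (x $ i - x $ j)\<^sup>2) *s sigmaM M (tr i j) f x
         + kz_coeff i j x *s sigmaM M (tr j i) (pd j f) x))"
proof -
  have f': "holo_along j f \<Omega>" for j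
    using holo_vec_imp_holo_along[OF f] .
  have "has_pd i (\<lambda>y. y $ i *s pd i f y) x (pd i (\<lambda>y. y $ i *s pd i f y) x)"
    using has_pd_mult[OF has_pds_coordinate holo_along_has_pd[OF holo_along_pd[OF f' \<Omega>_open] x]]
    by (metis has_pd_imp_pd)
  moreover have "has_pd i (\<lambda>z. kz_coeff i j z *s sigmaM M (tr i j) f z) x
      ((x $ j / (x $ i - x $ j)\<^sup>2) *s sigmaM M (tr i j) f x + kz_coeff i j x *s sigmaM M (tr j i) (pd j f) x)"
    if "j \<in> UNIV - {i}" for j
  proof -
    have "has_pd i (sigmaM M (tr i j) f) x (sigmaM M (tr j i) (pd j f) x)"
      using has_pd_sigmaM[OF x holo_along_has_pd[OF f' act_in_\<Omega>[OF x tr_permutes]]]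
      by (simp add: sigmaM_def transpose_commute)
    moreover have "i \<noteq> j" using that by simp
    ultimately show ?thesis
      using has_pd_mult[OF has_pds_kz_coeff] \<Omega>_coord_distinct[OF x] by blast
  qed
  ultimately show ?thesis
    unfolding Wop_def[abs_def] by (intro has_pd_add has_pd_scale has_pd_sum) auto
qed

lemma sigmaM_Wop:
  "sigmaM M (tr i j) (Wop \<kappa> M i f) x = x $ j *s sigmaM M (tr i j) (pd i f) x
     + complex_of_real \<kappa> *s (\<Sum>l\<in>UNIV - {i}.
         kz_coeff i l (act x (tr i j)) *s sigmaM M (tr i j) (sigmaM M (tr i l) f) x)"
  unfolding sigmaM_def[of M "tr i j"] Wop_def
  by (simp add: matrix_vector_right_distrib vector_scalar_commute matrix_vector_mult_sum_right)


lemma sigmaM_tr_cyclic: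
  assumes x: "x \<in> \<Omega>" and d: "i \<noteq> j" "i \<noteq> l" "j \<noteq> l"
  shows "sigmaM M (tr j l) (sigmaM M (tr j i) f) x = sigmaM M (tr i j) (sigmaM M (tr i l) f) x"
proof -
  have "tr j l \<circ> tr j i = tr i j \<circ> tr i l"
    using d by (auto simp: fun_eq_iff Transposition.transpose_def)
  then show ?thesis by (simp add: sigmaM_comp[OF x tr_permutes tr_permutes])
qed

lemma Vop_square_sum:
  assumes f: "holo_vec f \<Omega>" and x: "x \<in> \<Omega>"
  shows "L x *v (\<Sum>i\<in>UNIV. Vop i (Vop i (\<lambda>y. matrix_inv (L y) *v f y)) x)
     = (\<Sum>i\<in>UNIV. x $ i *s pd i (\<lambda>y. y $ i *s pd i f y) x)
       - complex_of_real (2 * \<kappa>) *s (\<Sum>i\<in>UNIV. \<Sum>j\<in>{j. i < j}.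
            (x $ i * x $ j / (x $ i - x $ j)\<^sup>2) *s
              (complex_of_real \<kappa> *s f x - sigmaM M (tr i j) f x))"
    (is "_ = ?rhs")
proof -
  have VV: "Vop i (Vop i (\<lambda>y. matrix_inv (L y) *v f y)) x
      = Vop i (\<lambda>y. matrix_inv (L y) *v Wop \<kappa> M i f y) x" for i
    using Uop_cong[OF Vop_matrix_inv_L[OF f] x] Vop_matrix_inv_L[OF f x] by simp
  have "L x *v (\<Sum>i\<in>UNIV. Vop i (Vop i (\<lambda>y. matrix_inv (L y) *v f y)) x)
     = (\<Sum>i\<in>UNIV. x $ i *s (pd i (\<lambda>y. y $ i *s pd i f y) x
         + complex_of_real \<kappa> *s (\<Sum>j\<in>UNIV - {i}. (x $ j / (x $ i - x $ j)\<^sup>2) *s sigmaM M (tr i j) f x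
             + kz_coeff i j x *s sigmaM M (tr j i) (pd j f) x))
       + complex_of_real \<kappa> *s (\<Sum>j\<in>UNIV - {i}. kz_coeff i j x *s
           (x $ j *s sigmaM M (tr i j) (pd i f) x + complex_of_real \<kappa> *s (\<Sum>l\<in>UNIV - {i}.
             kz_coeff i l (act x (tr i j)) *s sigmaM M (tr i j) (sigmaM M (tr i l) f) x))))"
    (is "_ = ?mid")
    unfolding matrix_vector_mult_sum_right VV Uop_conj[OF x has_pd_Wop[OF f x]] sigmaM_Wop ..
  also have "\<dots> = ?rhs"
    unfolding vec_eq_iff
  proof
    fix a
    have b_sym: "sigmaM M (tr j i) f x $ a = sigmaM M (tr i j) f x $ a" for i j
      by (simp add: transpose_commute)
    have e_diag: "sigmaM M (tr i j) (sigmaM M (tr i j) f) x $ a = f x $ a" for i j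
      using sigmaM_tr_involutive[OF x] by simp
    have e_cyclic: "sigmaM M (tr j l) (sigmaM M (tr j i) f) x $ a = sigmaM M (tr i j) (sigmaM M (tr i l) f) x $ a"
      if "i \<noteq> j" "i \<noteq> l" "j \<noteq> l" for i j l
      using sigmaM_tr_cyclic[OF x that] by simp
    note identity = kz_square_sum_identity[where x = x and k = "complex_of_real \<kappa>"
        and fz = "f x $ a" and p = "\<lambda>i. pd i (\<lambda>y. y $ i *s pd i f y) x $ a"
        and b = "\<lambda>i j. sigmaM M (tr i j) f x $ a" and d = "\<lambda>i j. sigmaM M (tr i j) (pd i f) x $ a"
        and e = "\<lambda>i j l. sigmaM M (tr i j) (sigmaM M (tr i l) f) x $ a", OF \<Omega>_coord_distinct[OF x] b_sym e_diag e_cyclic]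
    show "?mid $ a = ?rhs $ a"
      unfolding vector_add_component vector_smult_component sum_component vector_minus_component
      using identity by simp
  qed
  finally show ?thesis .
qed

end

theorem theorem1:
  fixes lam :: "nat list"
    and rho :: "('n::{finite,linorder} \<Rightarrow> 'n::{finite,linorder}) \<Rightarrow> complex^'k::finite^'k"
    and \<kappa> :: real
    and \<Omega> :: "(complex^'n::{finite,linorder}) set"
    and L :: "complex^'n::{finite,linorder} \<Rightarrow> complex^'k^'k"
    and M :: "('n::{finite,linorder} \<Rightarrow> 'n::{finite,linorder}) \<Rightarrow> complex^'n::{finite,linorder} \<Rightarrow> complex^'k^'k"
    and f :: "complex^'n::{finite,linorder} \<Rightarrow> complex^'k"
    and x :: "complex^'n::{finite,linorder}"
  defines "\<gamma> \<equiv> real_of_int (S1 lam) / real CARD('n::{finite,linorder})"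
  assumes part: "is_partition lam CARD('n)"
    and not_row: "lam \<noteq> [CARD('n)]"
    and not_col: "lam \<noteq> replicate CARD('n) 1"
    and rep: "irrep_of lam rho"
    and \<Omega>_open: "open \<Omega>"
    and \<Omega>_reg: "\<Omega> \<subseteq> regular"
    and \<Omega>_inv: "\<And>w. w permutes UNIV \<Longrightarrow> (\<lambda>y. act y w) ` \<Omega> = \<Omega>"
    and L_holo: "holo_mat L \<Omega>"
    and L_inv: "\<And>y. y \<in> \<Omega> \<Longrightarrow> invertible (L y)"
    and L_pde: "\<And>y i. y \<in> \<Omega> \<Longrightarrow>
       pdm i L y = \<kappa> *\<^sub>R (L y **
         ((\<Sum>j\<in>UNIV - {i}. mat (1 / (y $ i - y $ j)) ** rho (Transposition.transpose i j))
          - mat (complex_of_real \<gamma> / y $ i)))"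
    and M_lc: "\<And>w y. w permutes UNIV \<Longrightarrow> y \<in> \<Omega> \<Longrightarrow>
       \<exists>e>0. \<forall>z\<in>\<Omega>. dist z y < e \<longrightarrow> M w z = M w y"
    and M_GL: "\<And>w y. w permutes UNIV \<Longrightarrow> y \<in> \<Omega> \<Longrightarrow> invertible (M w y)"
    and M_id: "\<And>y. y \<in> \<Omega> \<Longrightarrow> M id y = mat 1"
    and M_cocycle: "\<And>w1 w2 y. w1 permutes UNIV \<Longrightarrow> w2 permutes UNIV \<Longrightarrow> y \<in> \<Omega> \<Longrightarrow>
       M (w1 \<circ> w2) y = M w2 (act y w1) ** M w1 y"
    and L_equiv: "\<And>w y. w permutes UNIV \<Longrightarrow> y \<in> \<Omega> \<Longrightarrow>
       L (act y w) = M w y ** L y ** rho w"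
    and f_holo: "holo_vec f \<Omega>"
    and x_in: "x \<in> \<Omega>"
  shows
    "(let c = 1 + complex_of_real (\<kappa> * \<gamma>);
          V = (\<lambda>i g y. Uop \<kappa> rho i g y - c *s g y);
          h = (\<lambda>y. matrix_inv (L y) *v f y)
      in L x *v (\<Sum>i\<in>UNIV. V i (V i h) x))
     = (\<Sum>i\<in>UNIV. (x $ i) *s pd i (\<lambda>y. (y $ i) *s pd i f y) x)
       - complex_of_real (2 * \<kappa>) *s
         (\<Sum>i\<in>UNIV. \<Sum>j\<in>{j. i < j}.
            (x $ i * x $ j / (x $ i - x $ j)\<^sup>2) *s
              (complex_of_real \<kappa> *s f x - sigmaM M (Transposition.transpose i j) f x))"
proof -
  \<comment> \<open>The identity is formal.\<close>
  interpret kz_system rho \<kappa> \<Omega> L M \<gamma>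
    by unfold_locales (fact assms)+
  show ?thesis
    unfolding Let_def using Vop_square_sum[OF f_holo x_in] by simp
qed

end
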